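(* Let $\hbar>0$, let $N\ge1$ and times $t_1<t_2<\dots<t_N<t_{N+1}\equiv t_D$. Consider two arms $\gamma\in\{\alpha,\beta\}$ with data, for $i=1,\dots,N$: masses $m_{\gamma i}>0$, wave vectors $k_{\gamma i}\in\mathbb{R}^3$ (possibly zero), frequencies $\omega_{\gamma i}\in\mathbb{R}$ and laser phases $\varphi_{\gamma i}\in\mathbb{R}$, and initial data $(q_{\gamma 1},p_{\gamma 1})\in\mathbb{R}^3\times\mathbb{R}^3$. Define recursively, for $i=1,\dots,N$, $(q_{\gamma,i+1},p_{\gamma,i+1})$ as the position and momentum at time $t_{i+1}$ of the classical trajectory of mass $m_{\gamma i}$ (Hamiltonian $H_{m_{\gamma i}}$ of the context) which is at $(q_{\gamma i},p_{\gamma i}+\hbar k_{\gamma i})$ at time $t_i$; write $q_{\gamma D}=q_{\gamma,N+1}$, $p_{\gamma D}=p_{\gamma,N+1}$, and $S_{\gamma i}=S_{cl}(t_{i+1},t_i,q_{\gamma i},p_{\gamma i}+\hbar k_{\gamma i},m_{\gamma i})$. Let $X_D,Y_D$ be complex $3\times 3$ matrices with $X_D$ invertible, and let $\Delta\phi(q,t_D)=\Phi_\beta(q)-\Phi_\alpha(q)$ with $\Phi_\gamma$ as in the context. Then for every $q\in\mathbb{R}^3$, \[ \begin{aligned} \Delta\phi(q,t_D)={}&(p_{\beta D}-p_{\alpha D})\cdot\Big(q-\frac{q_{\alpha D}+q_{\beta D}}{2}\Big)/\hbar-\frac{p_{\alpha 1}+p_{\beta 1}}{2\hbar}\cdot(q_{\beta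 1}-q_{\alpha 1})\\ &+\sum_{i=1}^N\Big[(k_{\beta i}-k_{\alpha i})\cdot\frac{q_{\alpha i}+q_{\beta i}}{2}-(\omega_{\beta i}-\omega_{\alpha i})\,t_i-(\varphi_{\beta i}-\varphi_{\alpha i})\Big]\\ &+\sum_{i=1}^N\Big(\frac{m_{\beta i}}{m_{\alpha i}}-1\Big)\Big[\frac{S_{\alpha i}}{\hbar}+\frac{p_{\alpha,i+1}}{2\hbar}\cdot(q_{\beta,i+1}-q_{\alpha,i+1})-\frac{p_{\alpha i}+\hbar k_{\alpha i}}{2\hbar}\cdot(q_{\beta i}-q_{\alpha i})\Big]\\ &+\frac{m_{\beta N}}{2\hbar}(q-q_{\beta D})\cdot\mathrm{Re}(Y_DX_D^{-1})(q-q_{\beta D})-\frac{m_{\alpha N}}{2\hbar}(q-q_{\alpha D})\cdot\mathrm{Re}(Y_DX_D^{-1})(q-q_{\alpha D}). \end{aligned} \]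
   Context: For a particle of mass $m>0$ with position $q\in\mathbb{R}^3$ and momentum $p\in\mathbb{R}^3$, the external Hamiltonian is \[ H_m(q,p,t)=\frac{1}{2m}\,p\cdot G(t)\,p-\frac{m}{2}\,q\cdot\Gamma(t)\,q-\Omega(t)\cdot(q\times p)-m\,g(t)\cdot q, \] with $G(t)$ continuous real symmetric invertible $3\times3$ matrices, $\Gamma(t)$ continuous real symmetric $3\times3$ matrices, $\Omega(t),g(t)\in\mathbb{R}^3$ continuous, the same for all masses. Classical trajectories solve Hamilton's equations for $H_m$, and $S_{cl}(s',s,q_0,p_0,m)=\int_s^{s'}(p\cdot\dot q-H_m)\,dt$ along the classical trajectory of mass $m$ starting at $(q_0,p_0)$ at time $s$. Model of the interferometer (Gaussian wave packets, beam splitters acting as the factor $e^{-i(\omega t_i-k\cdot q_{i}+\varphi)}$ at the interaction point $(t_i,q_i)$ and imparting momentum $\hbar k$, common complex width parameters $X_D,Y_D$ at detection): the output phase of arm $\gamma$ at position $q$ and time $t_D$ is \[ \Phi_\gamma(q)=\sum_{i=1}^N\Big[\frac{S_{\gamma i}}{\hbar}+k_{\gamma i}\cdot q_{\gamma i}-\omega_{\gamma i}t_i-\varphi_{\gamma i}\Big]+\frac{p_{\gamma D}\cdot(q-q_{\gamma D})}{\hbar}+\frac{m_{\gamma N}}{2\hbar}(q-q_{\gamma D})\cdot\mathrm{Re}(Y_DX_D^{-1})(q-q_{\gamma D}), \] and $\Delta\phi(q,t_D)=\Phi_\beta(q)-\Phi_\alpha(q)$ is the interferometer phase shift. A dot denotes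 the Euclidean inner product; $\mathrm{Re}$ is the entrywise real part. *)

theory Defs
  imports "HOL-Analysis.Analysis"
begin

definition hamiltonian ::
  "(real \<Rightarrow> real^3^3) \<Rightarrow> (real \<Rightarrow> real^3^3) \<Rightarrow> (real \<Rightarrow> real^3) \<Rightarrow> (real \<Rightarrow> real^3)
   \<Rightarrow> real \<Rightarrow> real^3 \<Rightarrow> real^3 \<Rightarrow> real \<Rightarrow> real" where
  "hamiltonian G Gam Om g m q p t =
     (1 / (2 * m)) * (p \<bullet> (G t *v p)) - (m / 2) * (q \<bullet> (Gam t *v q))
     - Om t \<bullet> cross3 q p - m * (g t \<bullet> q)"

definition admissible_fields ::
  "(real \<Rightarrow> real^3^3) \<Rightarrow> (real \<Rightarrow> real^3^3) \<Rightarrow> (real \<Rightarrow> real^3) \<Rightarrow> (real \<Rightarrow> real^3) \<Rightarrow> bool" where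
  "admissible_fields G Gam Om g \<longleftrightarrow>
     continuous_on UNIV G \<and> continuous_on UNIV Gam \<and> continuous_on UNIV Om \<and> continuous_on UNIV g \<and>
     (\<forall>t. transpose (G t) = G t \<and> invertible (G t) \<and> transpose (Gam t) = Gam t)"

definition hamilton_solution ::
  "(real \<Rightarrow> real^3^3) \<Rightarrow> (real \<Rightarrow> real^3^3) \<Rightarrow> (real \<Rightarrow> real^3) \<Rightarrow> (real \<Rightarrow> real^3)
   \<Rightarrow> real \<Rightarrow> (real \<Rightarrow> (real^3) \<times> (real^3)) \<Rightarrow> bool" where
  "hamilton_solution G Gam Om g m x \<longleftrightarrow>
     (\<forall>t. \<exists>dq dp.
        ((\<lambda>\<tau>. fst (x \<tau>)) has_vector_derivative dq) (at t) \<and>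
        ((\<lambda>\<tau>. snd (x \<tau>)) has_vector_derivative dp) (at t) \<and>
        ((\<lambda>p. hamiltonian G Gam Om g m (fst (x t)) p t) has_derivative (\<lambda>v. dq \<bullet> v)) (at (snd (x t))) \<and>
        ((\<lambda>q. hamiltonian G Gam Om g m q (snd (x t)) t) has_derivative (\<lambda>v. - (dp \<bullet> v))) (at (fst (x t))))"

definition classical_action ::
  "(real \<Rightarrow> real^3^3) \<Rightarrow> (real \<Rightarrow> real^3^3) \<Rightarrow> (real \<Rightarrow> real^3) \<Rightarrow> (real \<Rightarrow> real^3)
   \<Rightarrow> real \<Rightarrow> (real \<Rightarrow> (real^3) \<times> (real^3)) \<Rightarrow> real \<Rightarrow> real \<Rightarrow> real" where
  "classical_action G Gam Om g m x s s' =
     integral {s..s'} (\<lambda>t. snd (x t) \<bullet> vector_derivative (\<lambda>\<tau>. fst (x \<tau>)) (at t)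
                          - hamiltonian G Gam Om g m (fst (x t)) (snd (x t)) t)"

definition Re_mat :: "complex^3^3 \<Rightarrow> real^3^3" where
  "Re_mat A = (\<chi> i j. Re (A $ i $ j))"

text \<open>Output phase Phi_gamma(q) of one arm (indices i = 1..N; index N+1 = detection D).
  S i is the action of segment i, q i / p i the positions/momenta before the kick at t i.\<close>
definition output_phase ::
  "real \<Rightarrow> nat \<Rightarrow> (nat \<Rightarrow> real) \<Rightarrow> (nat \<Rightarrow> real) \<Rightarrow> (nat \<Rightarrow> real^3) \<Rightarrow> (nat \<Rightarrow> real)
   \<Rightarrow> (nat \<Rightarrow> real) \<Rightarrow> (nat \<Rightarrow> real) \<Rightarrow> (nat \<Rightarrow> real^3) \<Rightarrow> (nat \<Rightarrow> real^3)
   \<Rightarrow> complex^3^3 \<Rightarrow> complex^3^3 \<Rightarrow> real^3 \<Rightarrow> real" where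
  "output_phase hbar N t m k \<omega> \<phi> S q p XD YD r =
     (\<Sum>i=1..N. S i / hbar + k i \<bullet> q i - \<omega> i * t i - \<phi> i)
     + (p (N+1) \<bullet> (r - q (N+1))) / hbar
     + m N / (2 * hbar) * ((r - q (N+1)) \<bullet> (Re_mat (YD ** matrix_inv XD) *v (r - q (N+1))))"

end

theory Submission
  imports Defs
begin

(* Hamilton's equations for H_m are affine in (q, p), and along a solution the Lagrangian
   p.q' - H_m equals (p.q)'/2 + (m/2) g.q. For two solutions x, y of the same mass, the symmetry
   of G and Gamma makes L(y) - L(x) the exact derivative of (p_x + p_y).(q_y - q_x)/2, so the two
   actions differ by boundary terms only. Different masses reduce to this case: if (q, p) solves
   the equations for mass m_a, then (q, (m_b/m_a) p) solves them for mass m_b and its action is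
   scaled by m_b/m_a. Summing the resulting identity over the N segments, the boundary terms
   telescope except for the momentum kicks hbar k at the interaction points. *)

definition hamilton_velocity ::
  "(real \<Rightarrow> real^3^3) \<Rightarrow> (real \<Rightarrow> real^3) \<Rightarrow> real \<Rightarrow> real^3 \<Rightarrow> real^3 \<Rightarrow> real \<Rightarrow> real^3" where
  "hamilton_velocity G Om m q p t = (1/m) *\<^sub>R (G t *v p) - cross3 (Om t) q"

definition hamilton_force ::
  "(real \<Rightarrow> real^3^3) \<Rightarrow> (real \<Rightarrow> real^3) \<Rightarrow> (real \<Rightarrow> real^3) \<Rightarrow> real \<Rightarrow> real^3 \<Rightarrow> real^3 \<Rightarrow> real \<Rightarrow> real^3" where
  "hamilton_force Gam Om g m q p t = m *\<^sub>R (Gam t *v q) + cross3 p (Om t) + m *\<^sub>R g t"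

lemma inner_symmetric_matrix:
  fixes A :: "real^'n^'n"
  assumes "transpose A = A"
  shows "x \<bullet> (A *v y) = y \<bullet> (A *v x)"
  by (metis assms dot_lmul_matrix inner_commute vector_transpose_matrix)

lemma hamiltonian_has_derivative_momentum:
  assumes "transpose (G t) = G t" and "m \<noteq> 0"
  shows "((\<lambda>p. hamiltonian G Gam Om g m q p t) has_derivative
          (\<lambda>v. hamilton_velocity G Om m q p\<^sub>0 t \<bullet> v)) (at p\<^sub>0)"
proof -
  have expand: "(\<lambda>p. hamiltonian G Gam Om g m q p t) = (\<lambda>p. (1 / (2 * m)) * (p \<bullet> (G t *v p))
     - (m / 2) * (q \<bullet> (Gam t *v q)) - cross3 (Om t) q \<bullet> p - m * (g t \<bullet> q))"
    unfolding hamiltonian_def by (auto simp: cross3_simps)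
  have "((\<lambda>p. (1 / (2 * m)) * (p \<bullet> (G t *v p)) - (m / 2) * (q \<bullet> (Gam t *v q))
     - cross3 (Om t) q \<bullet> p - m * (g t \<bullet> q)) has_derivative
     (\<lambda>v. (1 / (2 * m)) * (p\<^sub>0 \<bullet> (G t *v v) + v \<bullet> (G t *v p\<^sub>0)) - 0 - cross3 (Om t) q \<bullet> v - 0)) (at p\<^sub>0)"
    by (intro derivative_intros bounded_linear_imp_has_derivative) simp
  then show ?thesis
    unfolding expand hamilton_velocity_def
    by (rule has_derivative_eq_rhs)
       (auto simp: assms fun_eq_iff inner_symmetric_matrix[OF assms(1), of p\<^sub>0]
          inner_diff_right inner_commute field_simps)
qed

lemma hamiltonian_has_derivative_position:
  assumes "transpose (Gam t) = Gam t"
  shows "((\<lambda>q. hamiltonian G Gam Om g m q p t) has_derivative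
          (\<lambda>v. - (hamilton_force Gam Om g m q\<^sub>0 p t \<bullet> v))) (at q\<^sub>0)"
proof -
  have expand: "(\<lambda>q. hamiltonian G Gam Om g m q p t) = (\<lambda>q. (1 / (2 * m)) * (p \<bullet> (G t *v p))
     - (m / 2) * (q \<bullet> (Gam t *v q)) - cross3 p (Om t) \<bullet> q - m * (g t \<bullet> q))"
    unfolding hamiltonian_def by (auto simp: cross3_simps)
  have "((\<lambda>q. (1 / (2 * m)) * (p \<bullet> (G t *v p)) - (m / 2) * (q \<bullet> (Gam t *v q))
     - cross3 p (Om t) \<bullet> q - m * (g t \<bullet> q)) has_derivative
     (\<lambda>v. 0 - (m / 2) * (q\<^sub>0 \<bullet> (Gam t *v v) + v \<bullet> (Gam t *v q\<^sub>0)) - cross3 p (Om t) \<bullet> v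
        - m * (g t \<bullet> v))) (at q\<^sub>0)"
    by (intro derivative_intros bounded_linear_imp_has_derivative) simp
  then show ?thesis
    unfolding expand hamilton_force_def
    by (rule has_derivative_eq_rhs)
       (auto simp: fun_eq_iff inner_symmetric_matrix[OF assms(1), of q\<^sub>0]
          inner_add_right inner_commute field_simps)
qed

lemma hamilton_solution_iff:
  assumes fields: "admissible_fields G Gam Om g" and "m \<noteq> 0"
  shows "hamilton_solution G Gam Om g m x \<longleftrightarrow>
    (\<forall>t. ((\<lambda>\<tau>. fst (x \<tau>)) has_vector_derivative hamilton_velocity G Om m (fst (x t)) (snd (x t)) t) (at t)
       \<and> ((\<lambda>\<tau>. snd (x \<tau>)) has_vector_derivative hamilton_force Gam Om g m (fst (x t)) (snd (x t)) t) (at t))"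
proof -
  have "transpose (G t) = G t" "transpose (Gam t) = Gam t" for t
    using fields unfolding admissible_fields_def by auto
  note grad_p = hamiltonian_has_derivative_momentum[where G=G, OF this(1) \<open>m \<noteq> 0\<close>]
   and grad_q = hamiltonian_has_derivative_position[where Gam=Gam, OF this(2)]
  have unique_p: "dq = hamilton_velocity G Om m (fst (x t)) (snd (x t)) t"
    if "((\<lambda>p. hamiltonian G Gam Om g m (fst (x t)) p t) has_derivative (\<lambda>v. dq \<bullet> v)) (at (snd (x t)))"
    for dq t
    using has_derivative_unique[OF that grad_p] by (metis vector_eq_rdot)
  have unique_q: "dp = hamilton_force Gam Om g m (fst (x t)) (snd (x t)) t"
    if "((\<lambda>q. hamiltonian G Gam Om g m q (snd (x t)) t) has_derivative (\<lambda>v. - (dp \<bullet> v))) (at (fst (x t)))"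
    for dp t
    using has_derivative_unique[OF that grad_q]
    by (metis neg_equal_iff_equal vector_eq_rdot)
  show ?thesis
    unfolding hamilton_solution_def
    by (intro all_cong1 iffI) (blast dest: unique_p unique_q, blast intro: grad_p grad_q)
qed

lemma hamiltonian_rescale_mass:
  assumes "m \<noteq> 0"
  shows "hamiltonian G Gam Om g m' q ((m'/m) *\<^sub>R p) t = (m'/m) * hamiltonian G Gam Om g m q p t"
  using assms by (simp add: hamiltonian_def cross_mult_right matrix_vector_mult_scaleR field_simps)

lemma hamilton_velocity_rescale_mass:
  assumes "m \<noteq> 0" and "m' \<noteq> 0"
  shows "hamilton_velocity G Om m' q ((m'/m) *\<^sub>R p) t = hamilton_velocity G Om m q p t"
  using assms by (simp add: hamilton_velocity_def matrix_vector_mult_scaleR)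

lemma hamilton_force_rescale_mass:
  assumes "m \<noteq> 0"
  shows "hamilton_force Gam Om g m' q ((m'/m) *\<^sub>R p) t = (m'/m) *\<^sub>R hamilton_force Gam Om g m q p t"
  using assms by (simp add: hamilton_force_def cross_mult_left algebra_simps)

lemma hamilton_solution_rescale_mass:
  assumes fields: "admissible_fields G Gam Om g" and "m \<noteq> 0" and "m' \<noteq> 0"
    and "hamilton_solution G Gam Om g m x"
  shows "hamilton_solution G Gam Om g m' (\<lambda>t. (fst (x t), (m'/m) *\<^sub>R snd (x t)))"
  using assms
  by (auto simp: hamilton_solution_iff hamilton_velocity_rescale_mass hamilton_force_rescale_mass
      intro: bounded_linear.has_vector_derivative[OF bounded_linear_scaleR_right])

lemma inner_cross3_cyclic: "a \<bullet> cross3 b c = b \<bullet> cross3 c a"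
  by (simp add: cross3_simps)

lemma lagrangian_hamilton_field:
  "p \<bullet> hamilton_velocity G Om m q p t - hamiltonian G Gam Om g m q p t
     = (hamilton_force Gam Om g m q p t \<bullet> q + p \<bullet> hamilton_velocity G Om m q p t) / 2 + m / 2 * (g t \<bullet> q)"
  by (simp add: hamiltonian_def hamilton_velocity_def hamilton_force_def inner_diff_right inner_add_left
      inner_add_right inner_cross3_cyclic[of "Om t"] inner_cross3_cyclic[of _ "Om t"] inner_commute field_simps)

lemma hamilton_field_reciprocity:
  assumes "transpose (G t) = G t" and "transpose (Gam t) = Gam t"
  shows "hamilton_force Gam Om g m q p t \<bullet> q' + p \<bullet> hamilton_velocity G Om m q' p' t - m * (g t \<bullet> q')
       = hamilton_force Gam Om g m q' p' t \<bullet> q + p' \<bullet> hamilton_velocity G Om m q p t - m * (g t \<bullet> q)"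
  by (simp add: hamilton_velocity_def hamilton_force_def inner_diff_right inner_add_left
      inner_cross3_cyclic[of "Om t"] inner_cross3_cyclic[of _ "Om t"] inner_commute
      inner_symmetric_matrix[OF assms(1), of p] inner_symmetric_matrix[OF assms(2), of q] algebra_simps)

lemma has_vector_derivative_inner:
  fixes f g :: "real \<Rightarrow> 'a::real_inner"
  assumes "(f has_vector_derivative f') (at t)" and "(g has_vector_derivative g') (at t)"
  shows "((\<lambda>\<tau>. f \<tau> \<bullet> g \<tau>) has_vector_derivative (f' \<bullet> g t + f t \<bullet> g')) (at t)"
  using has_derivative_inner[OF assms[unfolded has_vector_derivative_def]]
  unfolding has_vector_derivative_def by (rule has_derivative_eq_rhs) (auto simp: algebra_simps)

definition lagrangian ::
  "(real \<Rightarrow> real^3^3) \<Rightarrow> (real \<Rightarrow> real^3^3) \<Rightarrow> (real \<Rightarrow> real^3) \<Rightarrow> (real \<Rightarrow> real^3)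
   \<Rightarrow> real \<Rightarrow> (real \<Rightarrow> (real^3) \<times> (real^3)) \<Rightarrow> real \<Rightarrow> real" where
  "lagrangian G Gam Om g m x t = snd (x t) \<bullet> vector_derivative (\<lambda>\<tau>. fst (x \<tau>)) (at t)
     - hamiltonian G Gam Om g m (fst (x t)) (snd (x t)) t"

lemma classical_action_eq_integral:
  "classical_action G Gam Om g m x s s' = integral {s..s'} (lagrangian G Gam Om g m x)"
  unfolding classical_action_def lagrangian_def ..

lemma classical_action_rescale_mass:
  assumes "m \<noteq> 0"
  shows "classical_action G Gam Om g m' (\<lambda>t. (fst (x t), (m'/m) *\<^sub>R snd (x t))) s s'
       = (m'/m) * classical_action G Gam Om g m x s s'"
proof -
  have "lagrangian G Gam Om g m' (\<lambda>t. (fst (x t), (m'/m) *\<^sub>R snd (x t)))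
      = (\<lambda>t. (m'/m) *\<^sub>R lagrangian G Gam Om g m x t)"
    using assms by (simp add: fun_eq_iff lagrangian_def hamiltonian_rescale_mass algebra_simps)
  then show ?thesis
    unfolding classical_action_eq_integral integral_cmul by simp
qed

lemma lagrangian_solution:
  assumes "admissible_fields G Gam Om g" and "m \<noteq> 0" and "hamilton_solution G Gam Om g m x"
  shows "lagrangian G Gam Om g m x t
       = snd (x t) \<bullet> hamilton_velocity G Om m (fst (x t)) (snd (x t)) t
         - hamiltonian G Gam Om g m (fst (x t)) (snd (x t)) t"
proof -
  have "((\<lambda>\<tau>. fst (x \<tau>)) has_vector_derivative hamilton_velocity G Om m (fst (x t)) (snd (x t)) t) (at t)"
    using assms by (simp add: hamilton_solution_iff)
  then show ?thesis
    unfolding lagrangian_def by (simp add: vector_derivative_at)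
qed

lemma has_vector_derivative_integrable_on:
  fixes f :: "real \<Rightarrow> 'a::banach"
  assumes "\<And>t. (f has_vector_derivative f' t) (at t)"
  shows "f' integrable_on {a..b}"
proof (cases "a \<le> b")
  case True
  then show ?thesis
    using assms by (metis fundamental_theorem_of_calculus has_integral_integrable has_vector_derivative_at_within)
qed auto

lemma lagrangian_integrable:
  assumes fields: "admissible_fields G Gam Om g" and "m \<noteq> 0" and sol: "hamilton_solution G Gam Om g m x"
  shows "lagrangian G Gam Om g m x integrable_on {s..s'}"
proof -
  let ?q = "\<lambda>t. fst (x t)" and ?p = "\<lambda>t. snd (x t)"
  let ?v = "\<lambda>t. hamilton_velocity G Om m (?q t) (?p t) t" and ?f = "\<lambda>t. hamilton_force Gam Om g m (?q t) (?p t) t"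
  have q': "(?q has_vector_derivative ?v t) (at t)" and p': "(?p has_vector_derivative ?f t) (at t)" for t
    using sol by (simp_all add: hamilton_solution_iff[OF fields \<open>m \<noteq> 0\<close>])
  have "lagrangian G Gam Om g m x = (\<lambda>t. (?f t \<bullet> ?q t + ?p t \<bullet> ?v t) / 2 + m / 2 * (g t \<bullet> ?q t))"
    using lagrangian_solution[OF assms] lagrangian_hamilton_field by (simp add: fun_eq_iff)
  moreover have "(\<lambda>t. (?f t \<bullet> ?q t + ?p t \<bullet> ?v t) / 2) integrable_on {s..s'}"
  proof (rule has_vector_derivative_integrable_on)
    show "((\<lambda>t. (?p t \<bullet> ?q t) / 2) has_vector_derivative (?f t \<bullet> ?q t + ?p t \<bullet> ?v t) / 2) (at t)" for t
      using has_vector_derivative_inner[OF p' q', THEN has_vector_derivative_divide, of 2] by simp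
  qed
  moreover have "(\<lambda>t. m / 2 * (g t \<bullet> ?q t)) integrable_on {s..s'}"
  proof -
    have "continuous_on UNIV ?q"
      using q' by (meson continuous_at_imp_continuous_on has_vector_derivative_continuous)
    moreover have "continuous_on UNIV g"
      using fields unfolding admissible_fields_def by simp
    ultimately show ?thesis
      by (intro integrable_continuous_interval continuous_on_mult_left continuous_on_inner)
         (auto intro: continuous_on_subset)
  qed
  ultimately show ?thesis
    by (simp add: integrable_add)
qed

lemma classical_action_difference:
  assumes fields: "admissible_fields G Gam Om g" and "m \<noteq> 0"
    and sol_x: "hamilton_solution G Gam Om g m x" and sol_y: "hamilton_solution G Gam Om g m y"
    and "s \<le> s'"
  shows "classical_action G Gam Om g m y s s' - classical_action G Gam Om g m x s s'
       = (snd (x s') + snd (y s')) \<bullet> (fst (y s') - fst (x s')) / 2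
         - (snd (x s) + snd (y s)) \<bullet> (fst (y s) - fst (x s)) / 2"
proof -
  let ?L = "lagrangian G Gam Om g m"
  let ?B = "\<lambda>t. (snd (x t) + snd (y t)) \<bullet> (fst (y t) - fst (x t)) / 2"
  have "(?B has_vector_derivative ?L y t - ?L x t) (at t)" for t
  proof -
    let ?v = "\<lambda>z. hamilton_velocity G Om m (fst (z t)) (snd (z t)) t"
      and ?f = "\<lambda>z. hamilton_force Gam Om g m (fst (z t)) (snd (z t)) t"
    have "((\<lambda>t. fst (z t)) has_vector_derivative ?v z) (at t)"
      and "((\<lambda>t. snd (z t)) has_vector_derivative ?f z) (at t)"
      if "hamilton_solution G Gam Om g m z" for z
      using that by (simp_all add: hamilton_solution_iff[OF fields \<open>m \<noteq> 0\<close>])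
    then have deriv: "(?B has_vector_derivative
        ((?f x + ?f y) \<bullet> (fst (y t) - fst (x t)) + (snd (x t) + snd (y t)) \<bullet> (?v y - ?v x)) / 2) (at t)"
      using sol_x sol_y
      by (intro has_vector_derivative_divide has_vector_derivative_inner
          has_vector_derivative_add has_vector_derivative_diff) auto
    have sym: "transpose (G t) = G t" "transpose (Gam t) = Gam t"
      using fields unfolding admissible_fields_def by auto
    have "((?f x + ?f y) \<bullet> (fst (y t) - fst (x t)) + (snd (x t) + snd (y t)) \<bullet> (?v y - ?v x)) / 2
        = ?L y t - ?L x t"
      using hamilton_field_reciprocity[where G=G and Gam=Gam and Om=Om and g=g, OF sym,
          of m "fst (x t)" "snd (x t)" "fst (y t)" "snd (y t)"]
      by (simp add: lagrangian_solution[OF fields \<open>m \<noteq> 0\<close> sol_x] lagrangian_solution[OF fields \<open>m \<noteq> 0\<close> sol_y]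
          lagrangian_hamilton_field inner_add_left inner_add_right inner_diff_left inner_diff_right
          inner_commute field_simps)
    with deriv show ?thesis
      by simp
  qed
  then have "((\<lambda>t. ?L y t - ?L x t) has_integral ?B s' - ?B s) {s..s'}"
    using \<open>s \<le> s'\<close> by (intro fundamental_theorem_of_calculus) (auto intro: has_vector_derivative_at_within)
  moreover have "((\<lambda>t. ?L y t - ?L x t) has_integral
      classical_action G Gam Om g m y s s' - classical_action G Gam Om g m x s s') {s..s'}"
    unfolding classical_action_eq_integral
    by (intro has_integral_diff integrable_integral lagrangian_integrable[OF fields \<open>m \<noteq> 0\<close>] sol_x sol_y)
  ultimately show ?thesis
    by (rule has_integral_unique[rotated])
qed

lemma classical_action_mass_difference:
  assumes fields: "admissible_fields G Gam Om g" and "ma \<noteq> 0" and "mb \<noteq> 0"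
    and sol_a: "hamilton_solution G Gam Om g ma xa" and sol_b: "hamilton_solution G Gam Om g mb xb"
    and "s \<le> s'"
  shows "classical_action G Gam Om g mb xb s s' = (mb/ma) * classical_action G Gam Om g ma xa s s'
       + ((mb/ma) *\<^sub>R snd (xa s') + snd (xb s')) \<bullet> (fst (xb s') - fst (xa s')) / 2
       - ((mb/ma) *\<^sub>R snd (xa s) + snd (xb s)) \<bullet> (fst (xb s) - fst (xa s)) / 2"
  using classical_action_difference[OF fields \<open>mb \<noteq> 0\<close>
      hamilton_solution_rescale_mass[OF fields \<open>ma \<noteq> 0\<close> \<open>mb \<noteq> 0\<close> sol_a] sol_b \<open>s \<le> s'\<close>]
  by (simp add: classical_action_rescale_mass[OF \<open>ma \<noteq> 0\<close>])

theorem theorem2: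
  fixes hbar :: real and N :: nat and t :: "nat \<Rightarrow> real"
    and G Gam :: "real \<Rightarrow> real^3^3" and Om g :: "real \<Rightarrow> real^3"
    and ma mb :: "nat \<Rightarrow> real" and ka kb :: "nat \<Rightarrow> real^3"
    and wa wb fa fb :: "nat \<Rightarrow> real"
    and qa pa qb pb :: "nat \<Rightarrow> real^3"
    and xa xb :: "nat \<Rightarrow> real \<Rightarrow> (real^3) \<times> (real^3)"
    and XD YD :: "complex^3^3" and r :: "real^3"
  assumes hbar: "hbar > 0"
    and N: "N \<ge> 1"
    and times: "\<forall>i\<in>{1..N}. t i < t (Suc i)"
    and fields: "admissible_fields G Gam Om g"
    and masses: "\<forall>i\<in>{1..N}. ma i > 0 \<and> mb i > 0"
    and traj_a: "\<forall>i\<in>{1..N}. hamilton_solution G Gam Om g (ma i) (xa i)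
                   \<and> xa i (t i) = (qa i, pa i + hbar *\<^sub>R ka i)
                   \<and> xa i (t (Suc i)) = (qa (Suc i), pa (Suc i))"
    and traj_b: "\<forall>i\<in>{1..N}. hamilton_solution G Gam Om g (mb i) (xb i)
                   \<and> xb i (t i) = (qb i, pb i + hbar *\<^sub>R kb i)
                   \<and> xb i (t (Suc i)) = (qb (Suc i), pb (Suc i))"
    and XD: "invertible XD"
  shows "output_phase hbar N t mb kb wb fb
            (\<lambda>i. classical_action G Gam Om g (mb i) (xb i) (t i) (t (Suc i))) qb pb XD YD r
       - output_phase hbar N t ma ka wa fa
            (\<lambda>i. classical_action G Gam Om g (ma i) (xa i) (t i) (t (Suc i))) qa pa XD YD r
     = ((pb (N+1) - pa (N+1)) \<bullet> (r - (1/2) *\<^sub>R (qa (N+1) + qb (N+1)))) / hbar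
       - ((pa 1 + pb 1) \<bullet> (qb 1 - qa 1)) / (2 * hbar)
       + (\<Sum>i=1..N. (kb i - ka i) \<bullet> ((1/2) *\<^sub>R (qa i + qb i))
                    - (wb i - wa i) * t i - (fb i - fa i))
       + (\<Sum>i=1..N. (mb i / ma i - 1) *
            (classical_action G Gam Om g (ma i) (xa i) (t i) (t (Suc i)) / hbar
             + (pa (Suc i) \<bullet> (qb (Suc i) - qa (Suc i))) / (2 * hbar)
             - ((pa i + hbar *\<^sub>R ka i) \<bullet> (qb i - qa i)) / (2 * hbar)))
       + mb N / (2 * hbar) * ((r - qb (N+1)) \<bullet> (Re_mat (YD ** matrix_inv XD) *v (r - qb (N+1))))
       - ma N / (2 * hbar) * ((r - qa (N+1)) \<bullet> (Re_mat (YD ** matrix_inv XD) *v (r - qa (N+1))))"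
proof -
  let ?Sa = "\<lambda>i. classical_action G Gam Om g (ma i) (xa i) (t i) (t (Suc i))"
  let ?Sb = "\<lambda>i. classical_action G Gam Om g (mb i) (xb i) (t i) (t (Suc i))"
  define laser where "laser i = (kb i - ka i) \<bullet> ((1/2) *\<^sub>R (qa i + qb i)) - (wb i - wa i) * t i - (fb i - fa i)"
    for i
  define mass_defect where "mass_defect i = (mb i / ma i - 1) * (?Sa i / hbar
      + (pa (Suc i) \<bullet> (qb (Suc i) - qa (Suc i))) / (2 * hbar)
      - ((pa i + hbar *\<^sub>R ka i) \<bullet> (qb i - qa i)) / (2 * hbar))" for i
  define X where "X i = (pa i + pb i) \<bullet> (qb i - qa i) / 2" for i
  have segment: "?Sb i / hbar + kb i \<bullet> qb i - wb i * t i - fb i - (?Sa i / hbar + ka i \<bullet> qa i - wa i * t i - fa i)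
      = laser i + mass_defect i + (X (Suc i) - X i) / hbar" if "i \<in> {1..N}" for i
  proof -
    have "ma i \<noteq> 0" "mb i \<noteq> 0" "t i \<le> t (Suc i)"
      using masses times that by (fastforce intro: less_imp_le)+
    with traj_a traj_b that
    have action: "?Sb i = (mb i / ma i) * ?Sa i
        + ((mb i / ma i) *\<^sub>R pa (Suc i) + pb (Suc i)) \<bullet> (qb (Suc i) - qa (Suc i)) / 2
        - ((mb i / ma i) *\<^sub>R (pa i + hbar *\<^sub>R ka i) + (pb i + hbar *\<^sub>R kb i)) \<bullet> (qb i - qa i) / 2"
      using classical_action_mass_difference[OF fields, of "ma i" "mb i" "xa i" "xb i" "t i" "t (Suc i)"] by simp
    show ?thesis
      using hbar \<open>ma i \<noteq> 0\<close> unfolding action laser_def mass_defect_def X_def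
      by (simp add: inner_add_left inner_add_right inner_diff_left inner_diff_right inner_commute field_simps)
  qed
  have "(\<Sum>i=1..N. ?Sb i / hbar + kb i \<bullet> qb i - wb i * t i - fb i)
      - (\<Sum>i=1..N. ?Sa i / hbar + ka i \<bullet> qa i - wa i * t i - fa i)
      = (\<Sum>i=1..N. laser i) + (\<Sum>i=1..N. mass_defect i) + (X (Suc N) - X 1) / hbar"
    using N by (simp add: sum_subtractf[symmetric] segment sum.distrib sum_divide_distrib[symmetric] sum_Suc_diff)
  moreover have "(pb (N+1) \<bullet> (r - qb (N+1))) / hbar - (pa (N+1) \<bullet> (r - qa (N+1))) / hbar + (X (Suc N) - X 1) / hbar
      = ((pb (N+1) - pa (N+1)) \<bullet> (r - (1/2) *\<^sub>R (qa (N+1) + qb (N+1)))) / hbar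
        - ((pa 1 + pb 1) \<bullet> (qb 1 - qa 1)) / (2 * hbar)"
    using hbar unfolding X_def
    by (simp add: inner_add_left inner_add_right inner_diff_left inner_diff_right inner_commute field_simps)
  ultimately show ?thesis
    unfolding output_phase_def laser_def mass_defect_def by linarith
qed

end
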